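(* Let $\mathcal{R}$ be a set of rules on a finite set $Q$. For every critical rule $(A,q)$ of the antimatroid $\mathcal{A}(\mathcal{R})$, there exists a rule $(A',q)\in\mathcal{R}$ with $A\subseteq A'$.
   Context: A rule on $Q$ is a pair $(A,q)$ with $A\subseteq Q$, $q\in Q$; it accepts $Y\subseteq Q$ if $q\in Y$ implies $Y\cap A\neq\emptyset$. $\mathcal{K}(\mathcal{R})$ is the family of subsets accepted by all rules of $\mathcal{R}$, and $\mathcal{A}(\mathcal{R})$ is the family of $K\in\mathcal{K}(\mathcal{R})$ for which there is a sequence $\emptyset=Y_0\subseteq\dots\subseteq Y_k=K$ of members of $\mathcal{K}(\mathcal{R})$ with $|Y_{i+1}\setminus Y_i|=1$; it is an antimatroid. For an antimatroid $\mathcal{A}$ on $Q$, let $\mathcal{A}^*=\{Q\setminus X: X\in\mathcal{A}\}$ and $\tau(X)=\bigcap\{Y\in\mathcal{A}^*: X\subseteq Y\}$. A rule $(A,q)$ with $q\notin A$ is critical for $\mathcal{A}$ if, with $C=A\cup\{q\}$, $\tau(C)\setminus\{q\}\notin\mathcal{A}^*$ and $\tau(C)\setminus\{q,s\}\in\mathcal{A}^*$ for every $s\in A$. *)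

theory Defs
  imports Main
begin

type_synonym 'a rule = "'a set \<times> 'a"

definition rule_on :: "'a set \<Rightarrow> 'a rule \<Rightarrow> bool" where
  "rule_on Q r \<longleftrightarrow> fst r \<subseteq> Q \<and> snd r \<in> Q"

definition accepts :: "'a rule \<Rightarrow> 'a set \<Rightarrow> bool" where
  "accepts r Y \<longleftrightarrow> (snd r \<in> Y \<longrightarrow> Y \<inter> fst r \<noteq> {})"

definition Kfam :: "'a set \<Rightarrow> 'a rule set \<Rightarrow> 'a set set" where
  "Kfam Q R = {Y. Y \<subseteq> Q \<and> (\<forall>r\<in>R. accepts r Y)}"

definition Afam :: "'a set \<Rightarrow> 'a rule set \<Rightarrow> 'a set set" where
  "Afam Q R = {K \<in> Kfam Q R. \<exists>(Y :: nat \<Rightarrow> 'a set) k. Y 0 = {} \<and> Y k = K \<and>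
      (\<forall>i\<le>k. Y i \<in> Kfam Q R) \<and>
      (\<forall>i<k. Y i \<subseteq> Y (Suc i) \<and> card (Y (Suc i) - Y i) = 1)}"

definition dual_fam :: "'a set \<Rightarrow> 'a set set \<Rightarrow> 'a set set" where
  "dual_fam Q F = (\<lambda>X. Q - X) ` F"

definition tau :: "'a set \<Rightarrow> 'a set set \<Rightarrow> 'a set \<Rightarrow> 'a set" where
  "tau Q F X = \<Inter>{Y \<in> dual_fam Q F. X \<subseteq> Y}"

definition critical :: "'a set \<Rightarrow> 'a set set \<Rightarrow> 'a rule \<Rightarrow> bool" where
  "critical Q F r \<longleftrightarrow> (let A = fst r; q = snd r; C = insert q A in
      q \<notin> A \<and> tau Q F C - {q} \<notin> dual_fam Q F \<and>
      (\<forall>s\<in>A. tau Q F C - {q, s} \<in> dual_fam Q F))"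

end

theory Submission
  imports Defs
begin

text \<open>Let \<open>X\<close> be the largest feasible set avoiding \<open>C = A \<union> {q}\<close>; it exists because feasible sets
are closed under union, and \<open>\<tau>(C) = Q - X\<close>. Criticality then says that \<open>X \<union> {q}\<close> is not feasible
while every \<open>X \<union> {q, s}\<close> with \<open>s \<in> A\<close> is. If no rule \<open>(A', q)\<close> of \<open>\<R>\<close> had \<open>A \<subseteq> A'\<close>, each rule
with conclusion \<open>q\<close> would miss some \<open>s \<in> A\<close>, and acceptance of \<open>X \<union> {q, s}\<close> would force it to
accept \<open>X \<union> {q}\<close>. Then \<open>X \<union> {q}\<close> would lie in \<open>\<K>(\<R>)\<close> and extend the feasible set \<open>X\<close> by one
element, hence be feasible: a contradiction.\<close>

inductive accessible :: "'a set \<Rightarrow> 'a rule set \<Rightarrow> 'a set \<Rightarrow> bool" for Q R where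
  accessible_empty: "accessible Q R {}"
| accessible_insert:
    "accessible Q R Y \<Longrightarrow> x \<notin> Y \<Longrightarrow> insert x Y \<in> Kfam Q R \<Longrightarrow> accessible Q R (insert x Y)"

lemma Kfam_empty: "{} \<in> Kfam Q R"
  by (simp add: Kfam_def accepts_def)

lemma Kfam_Un: "A \<in> Kfam Q R \<Longrightarrow> B \<in> Kfam Q R \<Longrightarrow> A \<union> B \<in> Kfam Q R"
  unfolding Kfam_def accepts_def by blast

lemma accessible_in_Kfam: "accessible Q R K \<Longrightarrow> K \<in> Kfam Q R"
  by (induction rule: accessible.induct) (auto simp: Kfam_empty)

lemma Afam_imp_accessible:
  assumes "K \<in> Afam Q R"
  shows "accessible Q R K"
proof -
  obtain Y k where Y: "Y 0 = {}" "Y k = K" "\<forall>i\<le>k. Y i \<in> Kfam Q R"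
    "\<forall>i<k. Y i \<subseteq> Y (Suc i) \<and> card (Y (Suc i) - Y i) = 1"
    using assms unfolding Afam_def by blast
  have "accessible Q R (Y i)" if "i \<le> k" for i
    using that
  proof (induction i)
    case 0
    then show ?case using Y(1) by (simp add: accessible_empty)
  next
    case (Suc i)
    with Y(4) have "Y i \<subseteq> Y (Suc i)" "card (Y (Suc i) - Y i) = 1" by auto
    then obtain x where "Y (Suc i) = insert x (Y i)" "x \<notin> Y i"
      by (metis card_1_singletonE Diff_iff insertI1 Un_Diff_cancel2 insert_is_Un sup.order_iff)
    with Suc Y(3) show ?case by (metis Suc_leD accessible_insert)
  qed
  then show ?thesis using Y(2) by blast
qed

lemma accessible_imp_Afam: "accessible Q R K \<Longrightarrow> K \<in> Afam Q R"
proof (induction rule: accessible.induct)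
  case accessible_empty
  show ?case
    unfolding Afam_def using Kfam_empty by (auto intro!: exI[of _ "\<lambda>_. {}"] exI[of _ 0])
next
  case (accessible_insert K x)
  obtain Y k where Y: "Y 0 = {}" "Y k = K" "\<forall>i\<le>k. Y i \<in> Kfam Q R"
    "\<forall>i<k. Y i \<subseteq> Y (Suc i) \<and> card (Y (Suc i) - Y i) = 1"
    using accessible_insert.IH unfolding Afam_def by blast
  define Y' where "Y' i = (if i \<le> k then Y i else insert x K)" for i
  have "Y' 0 = {}" "Y' (Suc k) = insert x K"
    using Y(1) by (simp_all add: Y'_def)
  moreover have "\<forall>i\<le>Suc k. Y' i \<in> Kfam Q R"
    using Y(3) accessible_insert.hyps(3) by (auto simp: Y'_def le_Suc_eq)
  moreover have "insert x K - K = {x}"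
    using accessible_insert.hyps(2) by auto
  then have "\<forall>i<Suc k. Y' i \<subseteq> Y' (Suc i) \<and> card (Y' (Suc i) - Y' i) = 1"
    using Y(2,4) by (auto simp: Y'_def less_Suc_eq)
  ultimately show ?case
    unfolding Afam_def using accessible_insert.hyps(3) by blast
qed

lemma Afam_iff_accessible: "K \<in> Afam Q R \<longleftrightarrow> accessible Q R K"
  using Afam_imp_accessible accessible_imp_Afam by blast

lemma Afam_imp_Kfam: "K \<in> Afam Q R \<Longrightarrow> K \<in> Kfam Q R"
  unfolding Afam_def by blast

lemma Afam_subset: "K \<in> Afam Q R \<Longrightarrow> K \<subseteq> Q"
  using Afam_imp_Kfam unfolding Kfam_def by blast

lemma Afam_insert:
  "K \<in> Afam Q R \<Longrightarrow> insert x K \<in> Kfam Q R \<Longrightarrow> insert x K \<in> Afam Q R"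
  by (metis Afam_iff_accessible accessible_insert insert_absorb)

text \<open>Adding the elements of \<open>K\<^sub>2\<close> one at a time, in the order in which \<open>K\<^sub>2\<close> is built, keeps
each intermediate union in \<open>\<K>(\<R>)\<close>.\<close>

lemma accessible_Un: "accessible Q R K\<^sub>2 \<Longrightarrow> accessible Q R K\<^sub>1 \<Longrightarrow> accessible Q R (K\<^sub>1 \<union> K\<^sub>2)"
proof (induction rule: accessible.induct)
  case accessible_empty
  then show ?case by simp
next
  case (accessible_insert Y x)
  show ?case
  proof (cases "x \<in> K\<^sub>1 \<union> Y")
    case True
    then show ?thesis using accessible_insert by (simp add: insert_absorb)
  next
    case False
    have "K\<^sub>1 \<union> insert x Y \<in> Kfam Q R"
      using Kfam_Un accessible_in_Kfam accessible_insert by blast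
    then show ?thesis
      using accessible_insert False by (simp add: accessible.accessible_insert)
  qed
qed

lemma accessible_Union:
  "finite F \<Longrightarrow> \<forall>K\<in>F. accessible Q R K \<Longrightarrow> accessible Q R (\<Union>F)"
  by (induction rule: finite_induct) (auto simp: accessible_empty accessible_Un)

lemma Afam_greatest_disjoint:
  assumes "finite Q"
  obtains X where "X \<in> Afam Q R" "X \<inter> C = {}"
    "\<And>K. K \<in> Afam Q R \<Longrightarrow> K \<inter> C = {} \<Longrightarrow> K \<subseteq> X"
proof
  let ?F = "{K \<in> Afam Q R. K \<inter> C = {}}"
  have "finite ?F"
    using assms by (auto intro: finite_subset[of _ "Pow Q"] dest: Afam_subset)
  then show "\<Union>?F \<in> Afam Q R"
    by (simp add: Afam_iff_accessible accessible_Union)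
qed auto

lemma diff_in_dual_fam_iff:
  assumes "\<forall>K\<in>F. K \<subseteq> Q" and "Z \<subseteq> Q"
  shows "Q - Z \<in> dual_fam Q F \<longleftrightarrow> Z \<in> F"
  using assms unfolding dual_fam_def by (auto, metis double_diff order_refl)

lemma tau_eq_diff_greatest_disjoint:
  assumes "C \<subseteq> Q" and "X \<in> F" and "X \<inter> C = {}"
    and "\<And>K. K \<in> F \<Longrightarrow> K \<inter> C = {} \<Longrightarrow> K \<subseteq> X"
  shows "tau Q F C = Q - X"
proof -
  have "Q - X \<in> {Y \<in> dual_fam Q F. C \<subseteq> Y}"
    using assms(1-3) by (auto simp: dual_fam_def)
  moreover have "Q - X \<subseteq> Y" if "Y \<in> dual_fam Q F" "C \<subseteq> Y" for Y
    using that assms(4) by (auto simp: dual_fam_def)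
  ultimately show ?thesis
    unfolding tau_def by blast
qed

lemma insert_in_Kfam_if_no_covering_rule:
  assumes "X \<in> Kfam Q R" and "q \<in> Q"
    and "\<And>s. s \<in> A \<Longrightarrow> insert q (insert s X) \<in> Kfam Q R"
    and "\<nexists>A'. (A', q) \<in> R \<and> A \<subseteq> A'"
  shows "insert q X \<in> Kfam Q R"
  unfolding Kfam_def
proof (intro CollectI conjI ballI)
  show "insert q X \<subseteq> Q"
    using assms(1,2) by (auto simp: Kfam_def)
next
  fix r assume "r \<in> R"
  obtain A' p where r: "r = (A', p)" by fastforce
  show "accepts r (insert q X)"
  proof (cases "p = q")
    case False
    have "accepts r X"
      using assms(1) \<open>r \<in> R\<close> by (auto simp: Kfam_def)
    then show ?thesis
      using False r by (auto simp: accepts_def)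
  next
    case True
    then obtain s where "s \<in> A" "s \<notin> A'"
      using assms(4) \<open>r \<in> R\<close> r by auto
    moreover have "accepts r (insert q (insert s X))"
      using assms(3)[OF \<open>s \<in> A\<close>] \<open>r \<in> R\<close> by (auto simp: Kfam_def)
    ultimately show ?thesis
      using r by (auto simp: accepts_def)
  qed
qed

lemma
  assumes "\<forall>K\<in>F. K \<subseteq> Q" and "critical Q F (A, q)" and "tau Q F (insert q A) = Q - X"
    and "insert q A \<subseteq> Q" and "X \<subseteq> Q"
  shows critical_insert_not_in: "insert q X \<notin> F"
    and critical_insert_insert_in: "s \<in> A \<Longrightarrow> insert q (insert s X) \<in> F"
proof -
  have crit: "Q - X - {q} \<notin> dual_fam Q F" "\<forall>s\<in>A. Q - X - {q, s} \<in> dual_fam Q F"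
    using assms(2,3) by (simp_all add: critical_def Let_def)
  have "Q - X - {q} = Q - insert q X" "insert q X \<subseteq> Q"
    using assms(4,5) by blast+
  then show "insert q X \<notin> F"
    using crit(1) diff_in_dual_fam_iff[OF assms(1)] by simp
  assume "s \<in> A"
  have "Q - X - {q, s} = Q - insert q (insert s X)" "insert q (insert s X) \<subseteq> Q"
    using assms(4,5) \<open>s \<in> A\<close> by blast+
  then show "insert q (insert s X) \<in> F"
    using crit(2)[rule_format, OF \<open>s \<in> A\<close>] diff_in_dual_fam_iff[OF assms(1)] by simp
qed

theorem lemma3p6:
  fixes Q :: "'a set" and R :: "'a rule set" and A :: "'a set" and q :: 'a
  assumes "finite Q"
    and "\<forall>r\<in>R. rule_on Q r"
    and "rule_on Q (A, q)"
    and "critical Q (Afam Q R) (A, q)"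
  shows "\<exists>A'. (A', q) \<in> R \<and> A \<subseteq> A'"
proof (rule ccontr)
  assume no_cover: "\<not> ?thesis"
  have C: "insert q A \<subseteq> Q"
    using assms(3) by (auto simp: rule_on_def)
  obtain X where X: "X \<in> Afam Q R" "X \<inter> insert q A = {}"
    "\<And>K. K \<in> Afam Q R \<Longrightarrow> K \<inter> insert q A = {} \<Longrightarrow> K \<subseteq> X"
    using Afam_greatest_disjoint[OF assms(1)] by blast
  have tau: "tau Q (Afam Q R) (insert q A) = Q - X"
    using C X(1,2) by (intro tau_eq_diff_greatest_disjoint) (simp_all add: X(3))
  have F: "\<forall>K\<in>Afam Q R. K \<subseteq> Q"
    using Afam_subset by blast
  note critical = F assms(4) tau C Afam_subset[OF X(1)]
  have "q \<in> Q"
    using C by blast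
  have extensions: "insert q (insert s X) \<in> Kfam Q R" if "s \<in> A" for s
    using Afam_imp_Kfam critical_insert_insert_in[OF critical that] by blast
  have "insert q X \<in> Kfam Q R"
    using Afam_imp_Kfam[OF X(1)] \<open>q \<in> Q\<close> extensions no_cover
    by (rule insert_in_Kfam_if_no_covering_rule)
  then show False
    using critical_insert_not_in[OF critical] Afam_insert[OF X(1)] by blast
qed

end
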